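(* For every labelled program $P$ and interpretation $I\subseteq \mathit{At}$: $I \in \mathit{JM}(P)$ if and only if $I \in \mathit{JM}(P^I)$.
   Context: Fix a finite non-empty set $\mathit{At}$ of propositional atoms. A labelled rule $r$ has the form $\ell : p_1 \vee \dots \vee p_m \leftarrow q_1 \wedge \dots \wedge q_n \wedge \neg s_1 \wedge \dots \wedge \neg s_j \wedge \neg\neg t_1 \wedge \dots \wedge \neg\neg t_k$ with $m,n,j,k \ge 0$ and atoms in $\mathit{At}$; $\mathit{Lb}(r)=\ell$, $\mathit{Hd}(r)=p_1\vee\dots\vee p_m$, $H(r)=\{p_1,\dots,p_m\}$, $\mathit{Bd}(r)$ is the whole antecedent, $\mathit{Bd}^+(r)=q_1\wedge\dots\wedge q_n$, $B^+(r)=\{q_1,\dots,q_n\}$, $\mathit{Bd}^-(r)=\neg s_1 \wedge \dots \wedge \neg s_j \wedge \neg\neg t_1 \wedge \dots \wedge \neg\neg t_k$. Empty disjunction is $\bot$, empty conjunction $\top$. A labelled program $P$ is a finite set of labelled rules with no repeated label; $\mathit{Lb}(P)$ is its set of labels. An interpretation $I\subseteq\mathit{At}$ is a (classical) model of $P$ if $I\models \mathit{Bd}(r)\to\mathit{Hd}(r)$ for every $r\in P$. The reduct is $P^I=\{\ \mathit{Lb}(r): \mathit{Hd}(r) \leftarrow \mathit{Bd}^+(r) \mid r \in P,\ I \models \mathit{Bd}^-(r)\ \}$. $\mathit{Sup}(I,P,p)=\{ r \in P \mid p \in H(r),\ I \models \mathit{Bd}(r)\}$. A support graph of a model $I$ under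 $P$ is a directed graph $G=\langle I,E,\lambda\rangle$ with vertex set $I$, edges $E\subseteq I\times I$ and a labelling $\lambda: I\to \mathit{Lb}(P)$ such that (i) $\lambda$ is injective, and (ii) for every $p\in I$, the rule $r\in P$ with $\mathit{Lb}(r)=\lambda(p)$ satisfies $r\in \mathit{Sup}(I,P,p)$ and $B^+(r)=\{q \mid (q,p)\in E\}$. An explanation is an acyclic support graph. A classical model $I$ of $P$ is a justified model of $P$ if there is some explanation of $I$ under $P$; $\mathit{JM}(P)$ denotes the set of justified models of $P$. *)

theory Defs
  imports Main
begin

text \<open>Atoms are the elements of a finite type 'a (so At = UNIV, finite and nonempty).
  A labelled rule  l : p1 | ... | pm <- q1 & ... & qn & ~s1 & ... & ~sj & ~~t1 & ... & ~~tk
  is represented as  Rule l {p1..pm} {q1..qn} {s1..sj} {t1..tk}.\<close>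

datatype ('l, 'a) rule = Rule (lbl: 'l) (H: "'a set") (Bpos: "'a set") (Bneg: "'a set") (Bnn: "'a set")

definition labelled_program :: "('l, 'a::finite) rule set \<Rightarrow> bool" where
  "labelled_program P \<longleftrightarrow> finite P \<and> inj_on lbl P"

definition Lb :: "('l, 'a) rule set \<Rightarrow> 'l set" where
  "Lb P = lbl ` P"

definition sat_negbody :: "'a set \<Rightarrow> ('l, 'a) rule \<Rightarrow> bool" where
  "sat_negbody I r \<longleftrightarrow> (\<forall>s\<in>Bneg r. s \<notin> I) \<and> (\<forall>t\<in>Bnn r. t \<in> I)"

definition sat_body :: "'a set \<Rightarrow> ('l, 'a) rule \<Rightarrow> bool" where
  "sat_body I r \<longleftrightarrow> Bpos r \<subseteq> I \<and> sat_negbody I r"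

definition sat_head :: "'a set \<Rightarrow> ('l, 'a) rule \<Rightarrow> bool" where
  "sat_head I r \<longleftrightarrow> (\<exists>p\<in>H r. p \<in> I)"

definition is_model :: "'a set \<Rightarrow> ('l, 'a) rule set \<Rightarrow> bool" where
  "is_model I P \<longleftrightarrow> (\<forall>r\<in>P. sat_body I r \<longrightarrow> sat_head I r)"

definition reduct :: "('l, 'a) rule set \<Rightarrow> 'a set \<Rightarrow> ('l, 'a) rule set" where
  "reduct P I = {Rule (lbl r) (H r) (Bpos r) {} {} | r. r \<in> P \<and> sat_negbody I r}"

definition Sup_rules :: "'a set \<Rightarrow> ('l, 'a) rule set \<Rightarrow> 'a \<Rightarrow> ('l, 'a) rule set" where
  "Sup_rules I P p = {r \<in> P. p \<in> H r \<and> sat_body I r}"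

definition support_graph :: "('l, 'a) rule set \<Rightarrow> 'a set \<Rightarrow> ('a \<times> 'a) set \<Rightarrow> ('a \<Rightarrow> 'l) \<Rightarrow> bool" where
  "support_graph P I E lam \<longleftrightarrow>
     E \<subseteq> I \<times> I \<and> lam ` I \<subseteq> Lb P \<and> inj_on lam I \<and>
     (\<forall>p\<in>I. \<forall>r\<in>P. lbl r = lam p \<longrightarrow> r \<in> Sup_rules I P p \<and> Bpos r = {q. (q, p) \<in> E})"

definition explanation :: "('l, 'a) rule set \<Rightarrow> 'a set \<Rightarrow> ('a \<times> 'a) set \<Rightarrow> ('a \<Rightarrow> 'l) \<Rightarrow> bool" where
  "explanation P I E lam \<longleftrightarrow> support_graph P I E lam \<and> acyclic E"

definition JM :: "('l, 'a) rule set \<Rightarrow> 'a set set" where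
  "JM P = {I. is_model I P \<and> (\<exists>E lam. explanation P I E lam)}"

end

theory Submission
  imports Defs
begin

text \<open>The reduct keeps exactly the rules whose negative body holds in I, stripped to their
  positive part under the same label. So for every atom p the rules of the reduct supporting p in I
  are the stripped rules of P supporting p, with the same labels, heads and positive bodies, and I
  is a model of both programs or of neither. Because labels are unique, the support-graph condition
  on "the rule labelled lam p" is equivalent to the existence of a rule supporting p with that label
  and the prescribed positive body, a condition that reads the same for P and for its reduct.\<close>

definition drop_negbody :: "('l, 'a) rule \<Rightarrow> ('l, 'a) rule" where
  "drop_negbody r = Rule (lbl r) (H r) (Bpos r) {} {}"

lemma drop_negbody_sel [simp]:
  "lbl (drop_negbody r) = lbl r" "H (drop_negbody r) = H r" "Bpos (drop_negbody r) = Bpos r"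
  by (simp_all add: drop_negbody_def)

lemma sat_negbody_drop_negbody [simp]: "sat_negbody I (drop_negbody r)"
  by (simp add: drop_negbody_def sat_negbody_def)

lemma reduct_eq_image: "reduct P I = drop_negbody ` {r \<in> P. sat_negbody I r}"
  by (auto simp: reduct_def drop_negbody_def)

lemma is_model_reduct_iff: "is_model I (reduct P I) \<longleftrightarrow> is_model I P"
  by (auto simp: is_model_def reduct_eq_image sat_body_def sat_head_def)

lemma Sup_rules_reduct: "Sup_rules I (reduct P I) p = drop_negbody ` Sup_rules I P p"
  by (auto simp: Sup_rules_def reduct_eq_image sat_body_def)

lemma inj_on_lbl_reduct:
  assumes "inj_on lbl P"
  shows "inj_on lbl (reduct P I)"
  using assms by (auto simp: reduct_eq_image inj_on_def)

lemma ex_lbl_iff: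
  assumes "inj_on lbl P"
  shows "(l \<in> Lb P \<and> (\<forall>r\<in>P. lbl r = l \<longrightarrow> Q r)) \<longleftrightarrow> (\<exists>r\<in>P. lbl r = l \<and> Q r)"
  using assms unfolding Lb_def inj_on_def by blast

lemma support_graph_iff:
  assumes "inj_on lbl P"
  shows "support_graph P I E lam \<longleftrightarrow>
    E \<subseteq> I \<times> I \<and> inj_on lam I \<and>
    (\<forall>p\<in>I. \<exists>r\<in>Sup_rules I P p. lbl r = lam p \<and> Bpos r = {q. (q, p) \<in> E})"
    (is "_ \<longleftrightarrow> ?rhs")
proof -
  have "support_graph P I E lam \<longleftrightarrow> E \<subseteq> I \<times> I \<and> inj_on lam I \<and>
      lam ` I \<subseteq> Lb P \<and>
      (\<forall>p\<in>I. \<forall>r\<in>P. lbl r = lam p \<longrightarrow> r \<in> Sup_rules I P p \<and> Bpos r = {q. (q, p) \<in> E})"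
    unfolding support_graph_def by argo
  also have "\<dots> \<longleftrightarrow> E \<subseteq> I \<times> I \<and> inj_on lam I \<and>
      (\<forall>p\<in>I. \<exists>r\<in>P. lbl r = lam p \<and> r \<in> Sup_rules I P p \<and> Bpos r = {q. (q, p) \<in> E})"
    by (simp only: image_subset_iff ball_conj_distrib[symmetric] ex_lbl_iff[OF assms])
  also have "\<dots> \<longleftrightarrow> ?rhs"
    unfolding Sup_rules_def by auto
  finally show ?thesis .
qed

lemma support_graph_reduct_iff:
  assumes "inj_on lbl P"
  shows "support_graph (reduct P I) I E lam \<longleftrightarrow> support_graph P I E lam"
  by (simp add: support_graph_iff assms inj_on_lbl_reduct Sup_rules_reduct)

lemma explanation_reduct_iff:
  assumes "inj_on lbl P"
  shows "explanation (reduct P I) I E lam \<longleftrightarrow> explanation P I E lam"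
  by (simp add: explanation_def support_graph_reduct_iff assms)

theorem corollary1:
  fixes P :: "('l, 'a::finite) rule set" and I :: "'a set"
  assumes "labelled_program P"
  shows "I \<in> JM P \<longleftrightarrow> I \<in> JM (reduct P I)"
proof -
  have "inj_on lbl P"
    using assms by (simp add: labelled_program_def)
  then show ?thesis
    unfolding JM_def using is_model_reduct_iff explanation_reduct_iff by blast
qed

end
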